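(* Let $b>1$. Assume that for any $L$, any anytime neural network (ANN) of depth $L$ has anytime predictions at every depth $i > \frac{L}{b}$ that are competitive against the optimal predictor of depth $i$. Consider the EANN built from ANNs of exponentially increasing depths $b^0, b^1, b^2, \dots$, as described in the context. Then after $B$ layers of computation, the EANN produces anytime predictions that are competitive against the optimal predictor of depth $\frac{B}{C}$ for some $C>1$ (depending on $B$), such that $$\sup_B C = 2 + \frac{1}{b-1},$$ and $C$ has expectation $$E_{B\sim \mathrm{uniform}(1,L)}[C] \le 1 - \frac{1}{2b} + \frac{1+\ln(b)}{b-1},$$ where $L$ denotes the total number of layers of the EANN.
   Context: An anytime neural network (ANN) of depth $L$ is a feed-forward network computing feature maps $x_1,\dots,x_L$ layer by layer, with an auxiliary prediction attached to the feature maps, so that after computing $i$ layers a prediction is available. The "optimal of depth $i$" means the predictor obtained by training a network of depth $i$ (cost $i$ layers) only for its final prediction; a prediction is "competitive against the optimal of depth $d$" if its quality is comparable to that optimal predictor. Cost is measured in number of layers computed. An EANN (ensemble of exponentially deepening ANNs) consists of ANNs numbered $1,2,3,\dots$, where ANN number $n+1$ has depth $b^{n}$ (so ANN 1 has depth $1$). The ANNs are computed sequentially in order of depth; ANN $n+1$ starts only after ANNs $1,\dots,n$ are fully computed. Thus after $B$ layers of computation, with $B = z + \sum_{i=0}^{n-1} b^i$ where $0 < z \le b^n$, the EANN is at depth $z$ of ANN number $n+1$. At that moment the EANN outputs the anytime prediction of ANN $n+1$ at depth $z$ if $z > b^{n-1}$ (which by assumption is competitive with the optimal of depth $z$), and otherwise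 reuses the final prediction of ANN number $n$ (of depth $b^{n-1}$, competitive with the optimal of depth $b^{n-1}$). The quantity $C$ is the ratio of the consumed budget $B$ to the depth of the optimal predictor that the EANN's current prediction is competitive against. *)

theory Defs
  imports "HOL-Analysis.Analysis"
begin

text \<open>Total depth of the first n ANNs of the EANN (depths b^0, ..., b^(n-1)).\<close>
definition eann_S :: "real \<Rightarrow> nat \<Rightarrow> real" where
  "eann_S b n = (\<Sum>i<n. b ^ i)"

text \<open>After B layers (B > 0) the EANN is inside ANN number (eann_idx b B + 1), i.e.
  eann_S b n < B \<le> eann_S b (n+1) with n = eann_idx b B.\<close>
definition eann_idx :: "real \<Rightarrow> real \<Rightarrow> nat" where
  "eann_idx b B = (LEAST n. B \<le> eann_S b (Suc n))"

text \<open>Current depth z inside the ANN being computed: B = z + eann_S b n, 0 < z \<le> b^n.\<close>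
definition eann_z :: "real \<Rightarrow> real \<Rightarrow> real" where
  "eann_z b B = B - eann_S b (eann_idx b B)"

text \<open>Depth of the optimal predictor that the EANN's current prediction is competitive
  against: z if z > b^(n-1) (anytime prediction of ANN n+1, by the assumption on ANNs),
  otherwise b^(n-1) (final prediction of ANN n).\<close>
definition eann_depth :: "real \<Rightarrow> real \<Rightarrow> real" where
  "eann_depth b B =
     (let n = eann_idx b B; z = eann_z b B
      in if z > b powr (real n - 1) then z else b powr (real n - 1))"

definition eann_C :: "real \<Rightarrow> real \<Rightarrow> real" where
  "eann_C b B = B / eann_depth b B"

end

theory Submission
  imports Defs
begin

(* The budget axis beyond B = 1 splits into the segments (S n, S n + b^n], where S n =
  (b^n - 1)/(b - 1) is the cost of the first n ANNs. On such a segment the prediction is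
  competitive with depth b^(n-1) until the running ANN exceeds that depth, and with the
  running depth B - S n afterwards, so C is B / b^(n-1) and then B / (B - S n). Both
  pieces peak at the switch point, where C = 1 + S n / b^(n-1) increases to 2 + 1/(b-1).
  Integrating the two pieces gives S n (1 + ln b) + b^(n-1) (b - 1/2) per segment, at most
  the claimed constant times the segment length b^n; summing over segments bounds the mean. *)

lemma eann_S_Suc: "eann_S b (Suc n) = eann_S b n + b ^ n"
  by (simp add: eann_S_def)

lemma eann_S_mono: "b > 1 \<Longrightarrow> m \<le> n \<Longrightarrow> eann_S b m \<le> eann_S b n"
  unfolding eann_S_def by (intro sum_mono2) auto

lemma eann_S_ge_pow: "b > 1 \<Longrightarrow> b ^ n \<le> eann_S b (Suc n)"
  unfolding eann_S_Suc eann_S_def by (simp add: sum_nonneg)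

lemma eann_S_ge_1: "b > 1 \<Longrightarrow> 1 \<le> eann_S b (Suc n)"
  using eann_S_ge_pow[of b n] one_le_power[of b n] by linarith

lemma eann_S_Suc_div_pow:
  assumes "b > 1"
  shows "eann_S b (Suc m) / b ^ m = 1 + 1 / (b - 1) - 1 / ((b - 1) * b ^ m)"
proof -
  define a where "a = b ^ m"
  have "a > 0" using assms by (simp add: a_def)
  have "eann_S b (Suc m) / a = (b * a - 1) / ((b - 1) * a)"
    using assms by (simp add: a_def eann_S_def geometric_sum del: sum.lessThan_Suc)
  also have "\<dots> = b / (b - 1) - 1 / ((b - 1) * a)"
    using \<open>a > 0\<close> by (simp add: diff_divide_distrib)
  also have "b / (b - 1) = 1 + 1 / (b - 1)"
    using assms by (simp add: field_simps)
  finally show ?thesis by (simp add: a_def)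
qed

lemma has_integral_divide_const:
  fixes u v a :: real
  assumes "u \<le> v"
  shows "((\<lambda>x. x / a) has_integral (v\<^sup>2 - u\<^sup>2) / (2 * a)) {u..v}"
proof (cases "a = 0")
  case False
  have "((\<lambda>x. x\<^sup>2 / (2 * a)) has_real_derivative x / a) (at x within {u..v})" for x
    using False by (auto intro!: derivative_eq_intros simp: field_simps)
  then show ?thesis
    using fundamental_theorem_of_calculus[OF assms, of "\<lambda>x. x\<^sup>2 / (2 * a)"]
    by (simp add: has_real_derivative_iff_has_vector_derivative diff_divide_distrib)
qed simp

lemma has_integral_divide_shift:
  fixes s u v :: real
  assumes "s < u" "u \<le> v"
  shows "((\<lambda>x. x / (x - s)) has_integral (v - u + s * ln ((v - s) / (u - s)))) {u..v}"
proof -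
  define F where "F x = x + s * ln (x - s)" for x
  have "(F has_real_derivative x / (x - s)) (at x within {u..v})" if "x \<in> {u..v}" for x
  proof -
    have "x - s > 0" using that assms by auto
    then show ?thesis
      unfolding F_def by (auto intro!: derivative_eq_intros simp: field_simps)
  qed
  then have "((\<lambda>x. x / (x - s)) has_integral (F v - F u)) {u..v}"
    by (intro fundamental_theorem_of_calculus[OF assms(2)])
       (simp add: has_real_derivative_iff_has_vector_derivative)
  moreover have "F v - F u = v - u + s * ln ((v - s) / (u - s))"
    using assms by (simp add: F_def ln_div algebra_simps)
  ultimately show ?thesis by simp
qed

lemma eann_idx_eqI:
  assumes "b > 1" "eann_S b n < B" "B \<le> eann_S b (Suc n)"
  shows "eann_idx b B = n"
  unfolding eann_idx_def
proof (rule Least_equality)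
  fix k assume "B \<le> eann_S b (Suc k)"
  then show "n \<le> k"
    using assms eann_S_mono[of b "Suc k" n] by (cases "n \<le> k") auto
qed fact

lemma eann_segment_exists:
  assumes "b > 1" "B > 1"
  obtains m where "eann_S b (Suc m) < B" "B \<le> eann_S b (Suc (Suc m))"
proof -
  obtain k where "B < b ^ k" using real_arch_pow[OF assms(1)] by blast
  then have ex: "\<exists>k. B \<le> eann_S b (Suc k)"
    using eann_S_ge_pow[OF assms(1), of k] by (intro exI[of _ k]) linarith
  define n where "n = (LEAST n. B \<le> eann_S b (Suc n))"
  have n: "B \<le> eann_S b (Suc n)"
    unfolding n_def by (rule LeastI_ex[OF ex])
  have "eann_S b (Suc 0) = 1" by (simp add: eann_S_def)
  then have "n \<noteq> 0" using n assms(2) by (cases n) auto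
  then have "\<not> B \<le> eann_S b (Suc (n - 1))"
    unfolding n_def by (intro not_less_Least) (simp add: n_def)
  with n \<open>n \<noteq> 0\<close> show thesis
    by (intro that[of "n - 1"]) auto
qed

lemma eann_C_segment:
  assumes "b > 1" "eann_S b (Suc m) < B" "B \<le> eann_S b (Suc (Suc m))"
  shows "eann_C b B = (if b ^ m < B - eann_S b (Suc m)
                       then B / (B - eann_S b (Suc m)) else B / b ^ m)"
proof -
  have "eann_idx b B = Suc m" using eann_idx_eqI[OF assms] .
  moreover have "b powr (real (Suc m) - 1) = b ^ m"
    using assms(1) by (simp add: powr_realpow)
  ultimately show ?thesis
    unfolding eann_C_def eann_depth_def eann_z_def Let_def by simp
qed

lemma eann_C_one:
  assumes "b > 1"
  shows "eann_C b 1 = 1"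
proof -
  have "eann_idx b 1 = 0"
    using eann_idx_eqI[OF assms, of 0 1] by (simp add: eann_S_def)
  moreover have "b powr (0 - 1) < 1"
    using assms by (simp add: powr_minus inverse_less_1_iff)
  ultimately show ?thesis
    unfolding eann_C_def eann_depth_def eann_z_def Let_def by (simp add: eann_S_def)
qed

lemma eann_C_bounds:
  assumes b: "b > 1" and "B > 1"
  shows "1 < eann_C b B \<and> eann_C b B \<le> 2 + 1 / (b - 1)"
proof -
  obtain m where B: "eann_S b (Suc m) < B" "B \<le> eann_S b (Suc (Suc m))"
    using eann_segment_exists[OF assms] .
  define s where "s = eann_S b (Suc m)"
  define a where "a = b ^ m"
  have "0 < a" using b by (simp add: a_def)
  have "a \<le> s" using eann_S_ge_pow[OF b] by (simp add: a_def s_def)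
  have "s / a \<le> 1 + 1 / (b - 1)"
    using eann_S_Suc_div_pow[OF b, of m] b \<open>0 < a\<close> by (simp add: a_def s_def)
  moreover have "1 < eann_C b B \<and> eann_C b B \<le> 1 + s / a"
  proof (cases "a < B - s")
    case True
    then have "eann_C b B = 1 + s / (B - s)"
      using eann_C_segment[OF b B] \<open>0 < a\<close> by (simp add: s_def a_def field_simps)
    moreover have "s / (B - s) \<le> s / a"
      using True \<open>a \<le> s\<close> \<open>0 < a\<close> by (intro divide_left_mono) auto
    moreover have "0 < s / (B - s)"
      using True \<open>a \<le> s\<close> \<open>0 < a\<close> by simp
    ultimately show ?thesis by linarith
  next
    case False
    then have "eann_C b B = B / a"
      using eann_C_segment[OF b B] by (simp add: s_def a_def)
    moreover have "B / a \<le> 1 + s / a"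
      using False \<open>0 < a\<close> by (simp add: field_simps)
    moreover have "1 < B / a"
      using B(1) \<open>a \<le> s\<close> \<open>0 < a\<close> by (simp add: s_def)
    ultimately show ?thesis by linarith
  qed
  ultimately show ?thesis by linarith
qed

lemma eann_C_at_threshold:
  assumes "b > 1"
  shows "eann_C b (eann_S b (Suc m) + b ^ m) = 2 + 1 / (b - 1) - 1 / ((b - 1) * b ^ m)"
proof -
  have "b ^ m > 0" using assms by simp
  then have "eann_C b (eann_S b (Suc m) + b ^ m) = 1 + eann_S b (Suc m) / b ^ m"
    using assms eann_C_segment[OF assms, of m "eann_S b (Suc m) + b ^ m"]
    by (simp add: eann_S_Suc field_simps)
  then show ?thesis using eann_S_Suc_div_pow[OF assms] by simp
qed

lemma SUP_eann_C:
  assumes b: "b > 1"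
  shows "(SUP B\<in>{1..}. eann_C b B) = 2 + 1 / (b - 1)"
proof (rule antisym)
  have ub: "eann_C b B \<le> 2 + 1 / (b - 1)" if "B \<in> {1..}" for B
    using that eann_C_bounds[OF b, of B] eann_C_one[OF b] b
    by (cases "B = 1") auto
  then show "(SUP B\<in>{1..}. eann_C b B) \<le> 2 + 1 / (b - 1)"
    by (intro cSUP_least) auto
  have "(\<lambda>m. 2 + 1 / (b - 1) - inverse (b - 1) * inverse (b ^ m))
          \<longlonglongrightarrow> 2 + 1 / (b - 1) - inverse (b - 1) * 0"
    by (intro tendsto_intros LIMSEQ_inverse_realpow_zero b)
  then have "(\<lambda>m. eann_C b (eann_S b (Suc m) + b ^ m)) \<longlonglongrightarrow> 2 + 1 / (b - 1)"
    by (simp add: eann_C_at_threshold[OF b] divide_inverse inverse_mult_distrib)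
  moreover have "eann_C b (eann_S b (Suc m) + b ^ m) \<le> (SUP B\<in>{1..}. eann_C b B)" for m
    using eann_S_ge_1[OF b, of m] b
    by (intro cSUP_upper bdd_aboveI2[OF ub]) (auto intro: add_increasing2)
  ultimately show "2 + 1 / (b - 1) \<le> (SUP B\<in>{1..}. eann_C b B)"
    by (intro LIMSEQ_le_const2) auto
qed

lemma eann_C_segment_integral:
  assumes b: "b > 1"
  shows "(eann_C b has_integral eann_S b (Suc m) * (1 + ln b) + b ^ m * (b - 1/2))
           {eann_S b (Suc m)..eann_S b (Suc (Suc m))}"
proof -
  define s where "s = eann_S b (Suc m)"
  define a where "a = b ^ m"
  have "0 < a" using b by (simp add: a_def)
  have a_le: "a \<le> b * a" using b \<open>0 < a\<close> by simp
  have end_eq: "eann_S b (Suc (Suc m)) = s + b * a"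
    by (simp add: s_def a_def eann_S_Suc)
  have C: "eann_C b x = (if a < x - s then x / (x - s) else x / a)"
    if "s < x" "x \<le> s + b * a" for x
    using eann_C_segment[OF b, of m x] that by (simp add: s_def a_def end_eq)
  have "((\<lambda>x. x / a) has_integral ((s + a)\<^sup>2 - s\<^sup>2) / (2 * a)) {s..s + a}"
    using \<open>0 < a\<close> by (intro has_integral_divide_const) simp
  moreover have "((s + a)\<^sup>2 - s\<^sup>2) / (2 * a) = s + a / 2"
    using \<open>0 < a\<close> by (simp add: power2_eq_square field_simps)
  ultimately have linear: "((\<lambda>x. x / a) has_integral s + a / 2) {s..s + a}"
    by simp
  have "eann_C b x = x / a" if "x \<in> {s..s + a} - {s}" for x
  proof -
    have "s < x" "x \<le> s + a" using that by auto
    moreover from this have "x \<le> s + b * a" using a_le by linarith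
    ultimately show ?thesis using C[of x] by simp
  qed
  then have lower: "(eann_C b has_integral s + a / 2) {s..s + a}"
    by (rule has_integral_spike_finite[OF finite.insertI[OF finite.emptyI] _ linear])
  have "((\<lambda>x. x / (x - s)) has_integral
          (s + b * a - (s + a) + s * ln ((s + b * a - s) / (s + a - s)))) {s + a..s + b * a}"
    using \<open>0 < a\<close> a_le by (intro has_integral_divide_shift) auto
  moreover have "s + b * a - (s + a) + s * ln ((s + b * a - s) / (s + a - s)) = (b - 1) * a + s * ln b"
    using \<open>0 < a\<close> by (simp add: algebra_simps)
  ultimately have hyperbolic: "((\<lambda>x. x / (x - s)) has_integral (b - 1) * a + s * ln b) {s + a..s + b * a}"
    by simp
  have "eann_C b x = x / (x - s)" if "x \<in> {s + a..s + b * a} - {s + a}" for x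
  proof -
    have "a < x - s" "x \<le> s + b * a" using that by auto
    then show ?thesis using C[of x] \<open>0 < a\<close> by simp
  qed
  then have upper: "(eann_C b has_integral (b - 1) * a + s * ln b) {s + a..s + b * a}"
    by (rule has_integral_spike_finite[OF finite.insertI[OF finite.emptyI] _ hyperbolic])
  have "(eann_C b has_integral (s + a / 2) + ((b - 1) * a + s * ln b)) {s..s + b * a}"
    using \<open>0 < a\<close> a_le by (intro has_integral_combine[OF _ _ lower upper]) auto
  moreover have "(s + a / 2) + ((b - 1) * a + s * ln b) = s * (1 + ln b) + a * (b - 1/2)"
    by (simp add: algebra_simps)
  ultimately show ?thesis
    by (simp add: end_eq s_def a_def)
qed

lemma eann_C_segment_integral_le:
  assumes b: "b > 1"
  shows "eann_S b (Suc m) * (1 + ln b) + b ^ m * (b - 1/2)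
           \<le> (1 - 1 / (2 * b) + (1 + ln b) / (b - 1)) * b ^ Suc m"
proof -
  have "eann_S b (Suc m) \<le> b ^ Suc m / (b - 1)"
    using b by (simp add: eann_S_def geometric_sum divide_right_mono del: sum.lessThan_Suc)
  moreover have "0 \<le> 1 + ln b" using b by simp
  ultimately have "eann_S b (Suc m) * (1 + ln b) \<le> b ^ Suc m / (b - 1) * (1 + ln b)"
    by (rule mult_right_mono)
  moreover have "(1 - 1 / (2 * b) + (1 + ln b) / (b - 1)) * b ^ Suc m
                   = b ^ m * (b - 1/2) + b ^ Suc m / (b - 1) * (1 + ln b)"
    using b by (simp add: field_simps)
  ultimately show ?thesis by linarith
qed

lemma eann_C_integral_le:
  assumes b: "b > 1"
  obtains I where "(eann_C b has_integral I) {1..eann_S b (Suc m)}"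
    "I \<le> (1 - 1 / (2 * b) + (1 + ln b) / (b - 1)) * (eann_S b (Suc m) - 1)"
proof (induction m arbitrary: thesis)
  case 0
  show ?case
    using has_integral_refl(2)[of "eann_C b" 1] by (intro 0[of 0]) (simp_all add: eann_S_def)
next
  case (Suc m)
  obtain I where I: "(eann_C b has_integral I) {1..eann_S b (Suc m)}"
    "I \<le> (1 - 1 / (2 * b) + (1 + ln b) / (b - 1)) * (eann_S b (Suc m) - 1)"
    using Suc.IH by blast
  have "eann_S b (Suc m) \<le> eann_S b (Suc (Suc m))"
    using eann_S_mono[OF b] by simp
  then have "(eann_C b has_integral I + (eann_S b (Suc m) * (1 + ln b) + b ^ m * (b - 1/2)))
               {1..eann_S b (Suc (Suc m))}"
    using eann_S_ge_1[OF b, of m]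
    by (intro has_integral_combine[OF _ _ I(1) eann_C_segment_integral[OF b]]) auto
  moreover have "I + (eann_S b (Suc m) * (1 + ln b) + b ^ m * (b - 1/2))
      \<le> (1 - 1 / (2 * b) + (1 + ln b) / (b - 1)) * (eann_S b (Suc (Suc m)) - 1)"
  proof -
    have "eann_S b (Suc (Suc m)) - 1 = (eann_S b (Suc m) - 1) + b ^ Suc m"
      by (simp add: eann_S_Suc)
    then show ?thesis
      using I(2) eann_C_segment_integral_le[OF b, of m] by (simp only: distrib_left)
  qed
  ultimately show ?case by (rule Suc.prems)
qed

theorem proposition1:
  fixes b :: real
  assumes "b > 1"
  shows "(\<forall>B>1. eann_C b B > 1)
    \<and> (SUP B\<in>{1..}. eann_C b B) = 2 + 1 / (b - 1)
    \<and> (\<forall>N\<ge>2. eann_C b integrable_on {1..eann_S b N}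
           \<and> integral {1..eann_S b N} (eann_C b) / (eann_S b N - 1)
               \<le> 1 - 1 / (2 * b) + (1 + ln b) / (b - 1))"
proof (intro conjI allI impI)
  show "1 < eann_C b B" if "B > 1" for B
    using eann_C_bounds[OF assms that] by simp
  show "(SUP B\<in>{1..}. eann_C b B) = 2 + 1 / (b - 1)"
    using SUP_eann_C[OF assms] .
  fix N :: nat
  assume "N \<ge> 2"
  then obtain m where N: "N = Suc m" "m \<ge> 1" by (cases N) auto
  obtain I where I: "(eann_C b has_integral I) {1..eann_S b N}"
    "I \<le> (1 - 1 / (2 * b) + (1 + ln b) / (b - 1)) * (eann_S b N - 1)"
    using eann_C_integral_le[OF assms, of m] N(1) by blast
  then show "eann_C b integrable_on {1..eann_S b N}" by blast
  have "1 < eann_S b N"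
    using eann_S_ge_pow[OF assms, of m] N one_less_power[OF assms, of m] by simp
  then show "integral {1..eann_S b N} (eann_C b) / (eann_S b N - 1)
               \<le> 1 - 1 / (2 * b) + (1 + ln b) / (b - 1)"
    using I integral_unique[OF I(1)] by (simp add: divide_le_eq)
qed

end
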